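(* Let $M$ be a free $\mathbb{D}$-module with a finite $\mathbb{D}$-basis $\{\widehat m_1,\dots,\widehat m_n\}$, $V=\{\sum_l x_l\widehat m_l: x_l\in\mathbb{R}\}$, and $(\cdot,\cdot)$ a hyperbolic scalar product on $M$ which is hyperbolic positive and closed on $V$. Let $\widehat X,\widehat Y\in M$ with $\widehat X_{\mathbf{e_k}},\widehat Y_{\mathbf{e_k}}\ne0$ for $k=1,2$, and let $\theta_k\in[0,\pi]$ be the angle between $\widehat X_{\mathbf{e_k}}$ and $\widehat Y_{\mathbf{e_k}}$ in the real inner product space $V$, i.e. $\cos\theta_k=(\widehat X_{\mathbf{e_k}},\widehat Y_{\mathbf{e_k}})/(\|\widehat X_{\mathbf{e_k}}\|\,\|\widehat Y_{\mathbf{e_k}}\|)$. Then $$\cos\Big(\frac{\theta_1+\theta_2}{2}+\frac{\theta_1-\theta_2}{2}\mathbf{j}\Big)=\frac{(\widehat X,\widehat Y)}{(\widehat X,\widehat X)^{1/2}(\widehat Y,\widehat Y)^{1/2}}.$$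
   Context: Hyperbolic numbers: $\mathbb{D}=\{x+y\mathbf{j}: x,y\in\mathbb{R}\}$ with $\mathbf{j}^2=1$, a commutative ring. Idempotents $\mathbf{e_1}=(1+\mathbf{j})/2$, $\mathbf{e_2}=(1-\mathbf{j})/2$, with $\mathbf{e_1}^2=\mathbf{e_1}$, $\mathbf{e_2}^2=\mathbf{e_2}$, $\mathbf{e_1}\mathbf{e_2}=0$, $\mathbf{e_1}+\mathbf{e_2}=1$; every hyperbolic number is uniquely $a\mathbf{e_1}+b\mathbf{e_2}$ with $a,b\in\mathbb{R}$. $\mathbb{D}^+=\{a\mathbf{e_1}+b\mathbf{e_2}: a,b\ge0\}$, and $(a\mathbf{e_1}+b\mathbf{e_2})^{1/2}=\sqrt a\,\mathbf{e_1}+\sqrt b\,\mathbf{e_2}$. The cosine of $w\in\mathbb{D}$ is $\cos w=\sum_{n\ge0}(-1)^nw^{2n}/(2n)!$. For $\widehat X=\sum_l x_l\widehat m_l\in M$ with $x_l=x_{1l}\mathbf{e_1}+x_{2l}\mathbf{e_2}$, $x_{kl}\in\mathbb{R}$, put $\widehat X_{\mathbf{e_k}}=\sum_l x_{kl}\widehat m_l\in V$. A hyperbolic scalar product is a map $(\cdot,\cdot):M\times M\to\mathbb{D}$ with $(\widehat X,\widehat Y_1+\widehat Y_2)=(\widehat X,\widehat Y_1)+(\widehat X,\widehat Y_2)$, $(\widehat X,\alpha\widehat Y)=\alpha(\widehat X,\widehat Y)$ for $\alpha\in\mathbb{D}$, $(\widehat X,\widehat Y)=(\widehat Y,\widehat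 X)$, and $(\widehat X,\widehat X)=0\iff\widehat X=0$; it is hyperbolic positive if $(\widehat X,\widehat X)\in\mathbb{D}^+$ for all $\widehat X\in M$, and closed on $V$ if $(\widehat X,\widehat Y)\in\mathbb{R}$ for all $\widehat X,\widehat Y\in V$. For $\widehat Z\in V$, $\|\widehat Z\|=(\widehat Z,\widehat Z)^{1/2}$. *)

theory Defs
  imports Complex_Main "HOL-Library.Function_Algebras"
begin

datatype hyp = Hyp (hre: real) (hjm: real)

instantiation hyp :: comm_ring_1
begin
definition "0 = Hyp 0 0"
definition "1 = Hyp 1 0"
definition "u + v = Hyp (hre u + hre v) (hjm u + hjm v)"
definition "u - v = Hyp (hre u - hre v) (hjm u - hjm v)"
definition "- u = Hyp (- hre u) (- hjm u)"
definition "u * v = Hyp (hre u * hre v + hjm u * hjm v) (hre u * hjm v + hjm u * hre v)"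
instance
  by standard (auto simp: zero_hyp_def one_hyp_def plus_hyp_def minus_hyp_def
      uminus_hyp_def times_hyp_def algebra_simps intro!: hyp.expand)
end

definition hj :: hyp where "hj = Hyp 0 1"
definition hof_real :: "real \<Rightarrow> hyp" where "hof_real r = Hyp r 0"

definition he1 :: hyp where "he1 = Hyp (1/2) (1/2)"
definition he2 :: hyp where "he2 = Hyp (1/2) (-1/2)"

text \<open>Idempotent components: w = (hcomp1 w) e1 + (hcomp2 w) e2.\<close>
definition hcomp1 :: "hyp \<Rightarrow> real" where "hcomp1 w = hre w + hjm w"
definition hcomp2 :: "hyp \<Rightarrow> real" where "hcomp2 w = hre w - hjm w"

definition hpos :: "hyp \<Rightarrow> bool" where
  "hpos w \<longleftrightarrow> (\<exists>a b. a \<ge> 0 \<and> b \<ge> 0 \<and> w = hof_real a * he1 + hof_real b * he2)"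

definition hsqrt :: "hyp \<Rightarrow> hyp" where
  "hsqrt w = hof_real (sqrt (hcomp1 w)) * he1 + hof_real (sqrt (hcomp2 w)) * he2"

text \<open>Inverse / division (componentwise in the idempotent basis; meaningful
  for invertible denominators, i.e. both idempotent components nonzero).\<close>
definition hinv :: "hyp \<Rightarrow> hyp" where
  "hinv w = hof_real (1 / hcomp1 w) * he1 + hof_real (1 / hcomp2 w) * he2"
definition hdiv :: "hyp \<Rightarrow> hyp \<Rightarrow> hyp" where
  "hdiv u v = u * hinv v"

definition hcos :: "hyp \<Rightarrow> hyp" where
  "hcos w = (let c = (\<lambda>n. (-1) ^ n * w ^ (2 * n) * hof_real (1 / fact (2 * n)))
             in Hyp (\<Sum>n. hre (c n)) (\<Sum>n. hjm (c n)))"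

text \<open>An element X = sum_l x_l m_l of M is represented by its coordinate
  function x :: 'n \<Rightarrow> hyp.\<close>

definition hsmult :: "hyp \<Rightarrow> ('n \<Rightarrow> hyp) \<Rightarrow> ('n \<Rightarrow> hyp)" where
  "hsmult a X = (\<lambda>l. a * X l)"

definition realV :: "('n \<Rightarrow> hyp) set" where
  "realV = {X. \<forall>l. hjm (X l) = 0}"

definition hyp_scalar_product :: "(('n \<Rightarrow> hyp) \<Rightarrow> ('n \<Rightarrow> hyp) \<Rightarrow> hyp) \<Rightarrow> bool" where
  "hyp_scalar_product sp \<longleftrightarrow>
     (\<forall>X Y1 Y2. sp X (Y1 + Y2) = sp X Y1 + sp X Y2) \<and>
     (\<forall>X Y a. sp X (hsmult a Y) = a * sp X Y) \<and>
     (\<forall>X Y. sp X Y = sp Y X) \<and>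
     (\<forall>X. sp X X = 0 \<longleftrightarrow> X = 0)"

definition hyp_positive :: "(('n \<Rightarrow> hyp) \<Rightarrow> ('n \<Rightarrow> hyp) \<Rightarrow> hyp) \<Rightarrow> bool" where
  "hyp_positive sp \<longleftrightarrow> (\<forall>X. hpos (sp X X))"

definition closed_on_V :: "(('n \<Rightarrow> hyp) \<Rightarrow> ('n \<Rightarrow> hyp) \<Rightarrow> hyp) \<Rightarrow> bool" where
  "closed_on_V sp \<longleftrightarrow> (\<forall>X\<in>realV. \<forall>Y\<in>realV. hjm (sp X Y) = 0)"

definition comp_e1 :: "('n \<Rightarrow> hyp) \<Rightarrow> ('n \<Rightarrow> hyp)" where
  "comp_e1 X = (\<lambda>l. hof_real (hcomp1 (X l)))"
definition comp_e2 :: "('n \<Rightarrow> hyp) \<Rightarrow> ('n \<Rightarrow> hyp)" where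
  "comp_e2 X = (\<lambda>l. hof_real (hcomp2 (X l)))"

definition hnorm :: "(('n \<Rightarrow> hyp) \<Rightarrow> ('n \<Rightarrow> hyp) \<Rightarrow> hyp) \<Rightarrow> ('n \<Rightarrow> hyp) \<Rightarrow> hyp" where
  "hnorm sp Z = hsqrt (sp Z Z)"

end

theory Submission
  imports Defs
begin

text \<open>In the idempotent basis \<open>e\<^sub>1, e\<^sub>2\<close> the ring \<open>\<D>\<close> is \<open>\<real> \<times> \<real>\<close> with
  componentwise operations, and the square root, the quotient and the cosine series all act
  componentwise. A scalar product on \<open>M\<close> splits as well: by bilinearity and
  \<open>e\<^sub>1 e\<^sub>2 = 0\<close>, the \<open>k\<close>-th component of \<open>(X, Y)\<close> is that of
  \<open>(X\<^sub>e\<^sub>k, Y\<^sub>e\<^sub>k)\<close>. The argument of the cosine has components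
  \<open>\<theta>\<^sub>1\<close> and \<open>\<theta>\<^sub>2\<close>, so in each component the claimed identity is the definition of
  \<open>cos \<theta>\<^sub>k\<close>.\<close>

lemma hyp_eqI: "hcomp1 u = hcomp1 v \<Longrightarrow> hcomp2 u = hcomp2 v \<Longrightarrow> u = v"
  by (cases u; cases v) (auto simp: hcomp1_def hcomp2_def)

lemma hcomp1_add [simp]: "hcomp1 (u + v) = hcomp1 u + hcomp1 v"
  and hcomp2_add [simp]: "hcomp2 (u + v) = hcomp2 u + hcomp2 v"
  and hcomp1_minus [simp]: "hcomp1 (- u) = - hcomp1 u"
  and hcomp2_minus [simp]: "hcomp2 (- u) = - hcomp2 u"
  and hcomp1_mult [simp]: "hcomp1 (u * v) = hcomp1 u * hcomp1 v"
  and hcomp2_mult [simp]: "hcomp2 (u * v) = hcomp2 u * hcomp2 v"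
  by (simp_all add: hcomp1_def hcomp2_def plus_hyp_def uminus_hyp_def times_hyp_def
      algebra_simps)

lemma hcomp1_one [simp]: "hcomp1 1 = 1"
  and hcomp2_one [simp]: "hcomp2 1 = 1"
  and hcomp1_hof_real [simp]: "hcomp1 (hof_real r) = r"
  and hcomp2_hof_real [simp]: "hcomp2 (hof_real r) = r"
  and hcomp1_hj [simp]: "hcomp1 hj = 1"
  and hcomp2_hj [simp]: "hcomp2 hj = -1"
  and hcomp1_he1 [simp]: "hcomp1 he1 = 1"
  and hcomp2_he1 [simp]: "hcomp2 he1 = 0"
  and hcomp1_he2 [simp]: "hcomp1 he2 = 0"
  and hcomp2_he2 [simp]: "hcomp2 he2 = 1"
  by (simp_all add: hcomp1_def hcomp2_def one_hyp_def hof_real_def hj_def he1_def he2_def)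

lemma hcomp1_power [simp]: "hcomp1 (u ^ n) = hcomp1 u ^ n"
  and hcomp2_power [simp]: "hcomp2 (u ^ n) = hcomp2 u ^ n"
  by (induction n) simp_all

lemma hcomp1_hsqrt [simp]: "hcomp1 (hsqrt w) = sqrt (hcomp1 w)"
  and hcomp2_hsqrt [simp]: "hcomp2 (hsqrt w) = sqrt (hcomp2 w)"
  by (simp_all add: hsqrt_def)

lemma hcomp1_hdiv [simp]: "hcomp1 (hdiv u w) = hcomp1 u / hcomp1 w"
  and hcomp2_hdiv [simp]: "hcomp2 (hdiv u w) = hcomp2 u / hcomp2 w"
  by (simp_all add: hdiv_def hinv_def)

lemma hcomp_Hyp_sums:
  assumes "(\<lambda>n. hcomp1 (c n)) sums a" and "(\<lambda>n. hcomp2 (c n)) sums b"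
  shows "hcomp1 (Hyp (\<Sum>n. hre (c n)) (\<Sum>n. hjm (c n))) = a"
    and "hcomp2 (Hyp (\<Sum>n. hre (c n)) (\<Sum>n. hjm (c n))) = b"
proof -
  have re: "hre u = (hcomp1 u + hcomp2 u) / 2" and jm: "hjm u = (hcomp1 u - hcomp2 u) / 2" for u
    by (simp_all add: hcomp1_def hcomp2_def)
  have "(\<lambda>n. hre (c n)) sums ((a + b) / 2)" and "(\<lambda>n. hjm (c n)) sums ((a - b) / 2)"
    unfolding re jm using assms by (auto intro!: sums_divide sums_add sums_diff)
  then show "hcomp1 (Hyp (\<Sum>n. hre (c n)) (\<Sum>n. hjm (c n))) = a"
    and "hcomp2 (Hyp (\<Sum>n. hre (c n)) (\<Sum>n. hjm (c n))) = b"
    by (simp_all add: sums_iff hcomp1_def hcomp2_def field_simps)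
qed

lemma hcomp1_hcos [simp]: "hcomp1 (hcos w) = cos (hcomp1 w)"
  and hcomp2_hcos [simp]: "hcomp2 (hcos w) = cos (hcomp2 w)"
proof -
  define c where "c n = (-1) ^ n * w ^ (2 * n) * hof_real (1 / fact (2 * n))" for n
  have "(\<lambda>n. hcomp1 (c n)) sums cos (hcomp1 w)" and "(\<lambda>n. hcomp2 (c n)) sums cos (hcomp2 w)"
    using cos_paired[of "hcomp1 w"] cos_paired[of "hcomp2 w"] by (simp_all add: c_def)
  from hcomp_Hyp_sums[OF this]
  show "hcomp1 (hcos w) = cos (hcomp1 w)" and "hcomp2 (hcos w) = cos (hcomp2 w)"
    by (simp_all add: hcos_def c_def)
qed

lemma idempotent_decomposition: "X = hsmult he1 (comp_e1 X) + hsmult he2 (comp_e2 X)"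
  by (rule ext, rule hyp_eqI) (simp_all add: hsmult_def comp_e1_def comp_e2_def)

lemma
  assumes "hyp_scalar_product sp"
  shows hcomp1_scalar_product: "hcomp1 (sp X Y) = hcomp1 (sp (comp_e1 X) (comp_e1 Y))"
    and hcomp2_scalar_product: "hcomp2 (sp X Y) = hcomp2 (sp (comp_e2 X) (comp_e2 Y))"
proof -
  have add: "sp X (Y1 + Y2) = sp X Y1 + sp X Y2"
    and smult: "sp X (hsmult a Y) = a * sp X Y"
    and sym: "sp X Y = sp Y X" for X Y Y1 Y2 a
    using assms unfolding hyp_scalar_product_def by blast+
  have add_left: "sp (X1 + X2) Y = sp X1 Y + sp X2 Y" for X1 X2 Y
    by (metis add sym)
  have smult_left: "sp (hsmult a X) Y = a * sp X Y" for X Y a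
    by (metis smult sym)
  have "sp X Y = sp (hsmult he1 (comp_e1 X) + hsmult he2 (comp_e2 X))
                    (hsmult he1 (comp_e1 Y) + hsmult he2 (comp_e2 Y))"
    using idempotent_decomposition[of X] idempotent_decomposition[of Y] by simp
  also have "\<dots> = he1 * (he1 * sp (comp_e1 X) (comp_e1 Y) + he2 * sp (comp_e2 X) (comp_e1 Y))
                + he2 * (he1 * sp (comp_e1 X) (comp_e2 Y) + he2 * sp (comp_e2 X) (comp_e2 Y))"
    by (simp add: add add_left smult smult_left)
  finally have split: "sp X Y = \<dots>" .
  show "hcomp1 (sp X Y) = hcomp1 (sp (comp_e1 X) (comp_e1 Y))"
    and "hcomp2 (sp X Y) = hcomp2 (sp (comp_e2 X) (comp_e2 Y))"
    by (simp_all add: split)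
qed

theorem mainTheorem12:
  fixes sp :: "('n::finite \<Rightarrow> hyp) \<Rightarrow> ('n \<Rightarrow> hyp) \<Rightarrow> hyp"
    and X Y :: "'n \<Rightarrow> hyp" and \<theta>1 \<theta>2 :: real
  assumes "hyp_scalar_product sp" and "hyp_positive sp" and "closed_on_V sp"
    and "comp_e1 X \<noteq> 0" and "comp_e2 X \<noteq> 0"
    and "comp_e1 Y \<noteq> 0" and "comp_e2 Y \<noteq> 0"
    and "0 \<le> \<theta>1" and "\<theta>1 \<le> pi" and "0 \<le> \<theta>2" and "\<theta>2 \<le> pi"
    and "hof_real (cos \<theta>1) =
           hdiv (sp (comp_e1 X) (comp_e1 Y)) (hnorm sp (comp_e1 X) * hnorm sp (comp_e1 Y))"
    and "hof_real (cos \<theta>2) =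
           hdiv (sp (comp_e2 X) (comp_e2 Y)) (hnorm sp (comp_e2 X) * hnorm sp (comp_e2 Y))"
  shows "hcos (hof_real ((\<theta>1 + \<theta>2) / 2) + hof_real ((\<theta>1 - \<theta>2) / 2) * hj) =
         hdiv (sp X Y) (hsqrt (sp X X) * hsqrt (sp Y Y))"
proof (rule hyp_eqI)
  note sp = \<open>hyp_scalar_product sp\<close>
  have "hcomp1 (hof_real (cos \<theta>1)) = hcomp1 (hdiv (sp X Y) (hsqrt (sp X X) * hsqrt (sp Y Y)))"
    unfolding assms(12) hnorm_def
    by (simp add: hcomp1_scalar_product[OF sp, of X Y] hcomp1_scalar_product[OF sp, of X X]
        hcomp1_scalar_product[OF sp, of Y Y])
  then show "hcomp1 (hcos (hof_real ((\<theta>1 + \<theta>2) / 2) + hof_real ((\<theta>1 - \<theta>2) / 2) * hj)) =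
      hcomp1 (hdiv (sp X Y) (hsqrt (sp X X) * hsqrt (sp Y Y)))"
    by (simp add: field_simps)
  have "hcomp2 (hof_real (cos \<theta>2)) = hcomp2 (hdiv (sp X Y) (hsqrt (sp X X) * hsqrt (sp Y Y)))"
    unfolding assms(13) hnorm_def
    by (simp add: hcomp2_scalar_product[OF sp, of X Y] hcomp2_scalar_product[OF sp, of X X]
        hcomp2_scalar_product[OF sp, of Y Y])
  then show "hcomp2 (hcos (hof_real ((\<theta>1 + \<theta>2) / 2) + hof_real ((\<theta>1 - \<theta>2) / 2) * hj)) =
      hcomp2 (hdiv (sp X Y) (hsqrt (sp X X) * hsqrt (sp Y Y)))"
    by (simp add: field_simps)
qed

end
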